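(* Let $R>0$ and $\rho,\lambda_1,\lambda_2>0$, and let $H,G_1,G_2$ be independent exponential random variables with rates $\rho,\lambda_1,\lambda_2$ respectively (representing $h^2,g_1^2,g_2^2$). For $\Delta>0$ let (logarithms base $2$, $[x]^+=\max\{x,0\}$) $$R_{\mathrm{QMF}}(\Delta)=\Big[\min\Big\{\log\Big(1+\frac{H}{1+\Delta}+G_2\Big),\ \log(1+G_1+G_2)-\log\frac{1+\Delta}{\Delta}\Big\}\Big]^+,$$ and for each value of $H$ let $\Delta^*(H)>0$ be a quantization level minimizing the conditional outage probability $\Pr\{R>R_{\mathrm{QMF}}(\Delta)\mid H\}$ over $\Delta>0$. Define \begin{align*} P_{\mathrm{DF}}&=\Pr\{R<\log(1+H),\ R>\log(1+G_1+G_2)\}+\Pr\{R\ge\log(1+H),\ R>\log(1+G_2)\},\\ P_{\mathrm{QMF}}&=\Pr\{R>R_{\mathrm{QMF}}(\Delta^*(H))\},\\ P_{\mathrm{HYB}}&=\Pr\{R<\log(1+H),\ R>\log(1+G_1+G_2)\}+\Pr\{R\ge\log(1+H),\ R>R_{\mathrm{QMF}}(\Delta^*(H))\}. \end{align*} Then $P_{\mathrm{HYB}}<P_{\mathrm{QMF}}$ and $P_{\mathrm{HYB}}<P_{\mathrm{DF}}$.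
   Context: This concerns the full-duplex Gaussian single-relay channel ($Y_r=\mathsf hX+Z_r$, $Y=\mathsf g_1X_r+\mathsf g_2X+Z$, unit powers and noise) under independent Rayleigh fading ($|\mathsf h|^2,|\mathsf g_1|^2,|\mathsf g_2|^2$ exponential), where the relay knows only its incoming channel (receiver CSI). $P_{\mathrm{DF}}$ is the outage probability at rate $R$ of decode-and-forward (relay decodes if $R<\log(1+h^2)$, otherwise direct transmission), $P_{\mathrm{QMF}}$ that of quantize-map-and-forward with the receiver-CSI-optimal Gaussian quantizer $\Delta^*(h)$, and $P_{\mathrm{HYB}}$ that of the hybrid scheme in which the relay decodes and forwards when $R<\log(1+h^2)$ and otherwise performs QMF with distortion $\Delta^*(h)$. *)

theory Defs
  imports "HOL-Probability.Probability"
begin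

definition exp_law :: "real \<Rightarrow> real measure" where
  "exp_law r = density lborel (exponential_density r)"

definition chan_law :: "real \<Rightarrow> real \<Rightarrow> real \<Rightarrow> (real \<times> real \<times> real) measure" where
  "chan_law rho l1 l2 = exp_law rho \<Otimes>\<^sub>M (exp_law l1 \<Otimes>\<^sub>M exp_law l2)"

definition R_QMF :: "real \<Rightarrow> real \<Rightarrow> real \<Rightarrow> real \<Rightarrow> real" where
  "R_QMF h g1 g2 D = max 0 (min (log 2 (1 + h / (1 + D) + g2))
                              (log 2 (1 + g1 + g2) - log 2 ((1 + D) / D)))"

text \<open>Conditional outage probability of QMF given H = h (G1, G2 independent of H).\<close>
definition cond_outage :: "real \<Rightarrow> real \<Rightarrow> real \<Rightarrow> real \<Rightarrow> real \<Rightarrow> real" where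
  "cond_outage l1 l2 R h D =
     measure (exp_law l1 \<Otimes>\<^sub>M exp_law l2) {(g1, g2). R > R_QMF h g1 g2 D}"

definition P_DF :: "real \<Rightarrow> real \<Rightarrow> real \<Rightarrow> real \<Rightarrow> real" where
  "P_DF rho l1 l2 R =
     measure (chan_law rho l1 l2) {(h, g1, g2). R < log 2 (1 + h) \<and> R > log 2 (1 + g1 + g2)}
   + measure (chan_law rho l1 l2) {(h, g1, g2). R \<ge> log 2 (1 + h) \<and> R > log 2 (1 + g2)}"

definition P_QMF :: "real \<Rightarrow> real \<Rightarrow> real \<Rightarrow> real \<Rightarrow> (real \<Rightarrow> real) \<Rightarrow> real" where
  "P_QMF rho l1 l2 R Dstar =
     measure (chan_law rho l1 l2) {(h, g1, g2). R > R_QMF h g1 g2 (Dstar h)}"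

definition P_HYB :: "real \<Rightarrow> real \<Rightarrow> real \<Rightarrow> real \<Rightarrow> (real \<Rightarrow> real) \<Rightarrow> real" where
  "P_HYB rho l1 l2 R Dstar =
     measure (chan_law rho l1 l2) {(h, g1, g2). R < log 2 (1 + h) \<and> R > log 2 (1 + g1 + g2)}
   + measure (chan_law rho l1 l2) {(h, g1, g2). R \<ge> log 2 (1 + h) \<and> R > R_QMF h g1 g2 (Dstar h)}"

end

theory Submission
  imports Defs
begin

text \<open>
  Write \<open>a = 2^R - 1\<close>. When \<open>h > a\<close> the hybrid scheme uses decode-and-forward, whose outage
  event \<open>log(1 + g1 + g2) < R\<close> is contained in the QMF outage event, because QMF pays the extra
  \<open>log((1 + \<Delta>)/\<Delta>)\<close> on the relay cut; when \<open>h \<le> a\<close> both schemes coincide. The inclusion is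
  strict on an event of positive probability: \<open>h > a\<close>, \<open>\<Delta>*(h)\<close> bounded, \<open>g1\<close> small and \<open>g2\<close>
  slightly above \<open>a\<close>, where DF succeeds but the quantization penalty makes QMF fail.

  Against DF the two schemes differ only when \<open>h \<le> a\<close>, where DF transmits directly. For
  fixed \<open>h > 0\<close> a coarse quantizer (\<open>\<Delta>\<close> large) already beats direct transmission: the first
  cut gains the relay share \<open>\<delta> = h/(1 + \<Delta>)\<close> of the source power, which rescues an event of
  probability of order \<open>\<delta>\<close>, while the second cut only fails on an event of probability of
  order \<open>(2^R/\<Delta>)\<^sup>2\<close>. The optimal \<open>\<Delta>*(h)\<close> is at least as good, and integrating over
  \<open>h \<in> (0, a]\<close>, a set of positive probability, gives the strict inequality.
\<close>

section \<open>Exponential laws\<close>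

lemma sets_exp_law [simp, measurable_cong]: "sets (exp_law r) = sets borel"
  by (simp add: exp_law_def)

lemma space_exp_law [simp]: "space (exp_law r) = UNIV"
  by (simp add: exp_law_def)

lemma prob_space_exp_law: "0 < r \<Longrightarrow> prob_space (exp_law r)"
  unfolding exp_law_def by (rule prob_space_exponential_density)

lemma finite_measure_exp_law: "0 < r \<Longrightarrow> finite_measure (exp_law r)"
  using prob_space_exp_law by (simp add: prob_space_def)

lemma emeasure_exp_law_singleton: "emeasure (exp_law r) {t} = 0"
  using AE_lborel_singleton[of t]
  by (simp add: exp_law_def emeasure_density nn_integral_0_iff_AE indicator_eq_0_iff)

lemma measure_exp_law_atMost:
  assumes "0 < r" "0 \<le> t"
  shows "measure (exp_law r) {..t} = 1 - exp (- t * r)"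
proof -
  interpret prob_space "exp_law r" using prob_space_exp_law[OF assms(1)] .
  have "distributed (exp_law r) lborel (\<lambda>x. x) (exponential_density r)"
    unfolding distributed_def exp_law_def
    using assms by (auto simp: distr_id2 exponential_density_nonneg)
  from exponential_distributedD_le[OF this assms(2) assms(1)]
  show ?thesis by (simp add: atMost_def)
qed

lemma measure_exp_law_greaterThanAtMost:
  assumes "0 < r" "0 \<le> s" "s \<le> t"
  shows "measure (exp_law r) {s<..t} = exp (- s * r) - exp (- t * r)"
proof -
  interpret prob_space "exp_law r" using prob_space_exp_law[OF assms(1)] .
  have "{s<..t} = {..t} - {..s}" by auto
  then have "measure (exp_law r) {s<..t} = measure (exp_law r) {..t} - measure (exp_law r) {..s}"
    using assms by (simp add: finite_measure_Diff)
  then show ?thesis using measure_exp_law_atMost[OF assms(1)] assms by simp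
qed

lemma measure_exp_law_greaterThanLessThan:
  assumes "0 < r" "0 \<le> s" "s \<le> t"
  shows "measure (exp_law r) {s<..<t} = exp (- s * r) - exp (- t * r)"
proof -
  have "{s<..<t} = {s<..t} - {t}" by auto
  moreover have "{t} \<in> null_sets (exp_law r)" using emeasure_exp_law_singleton by auto
  ultimately show ?thesis
    using measure_exp_law_greaterThanAtMost[OF assms] by (simp add: measure_Diff_null_set)
qed

lemma measure_exp_law_greaterThan:
  assumes "0 < r" "0 \<le> s"
  shows "measure (exp_law r) {s<..} = exp (- s * r)"
proof -
  interpret prob_space "exp_law r" using prob_space_exp_law[OF assms(1)] .
  have "{s<..} = space (exp_law r) - {..s}" by auto
  then have "measure (exp_law r) {s<..} = 1 - measure (exp_law r) {..s}"
    by (simp add: prob_compl del: space_exp_law)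
  then show ?thesis using measure_exp_law_atMost[OF assms] by simp
qed

lemma null_sets_exp_law_atMost_0: "0 < r \<Longrightarrow> {..0} \<in> null_sets (exp_law r)"
  using measure_exp_law_atMost[of r 0] finite_measure.emeasure_eq_measure[OF finite_measure_exp_law]
  by (simp add: null_sets_def)

lemma AE_exp_law_pos: "0 < r \<Longrightarrow> AE x in exp_law r. 0 < x"
  by (rule AE_I'[OF null_sets_exp_law_atMost_0]) auto

lemma measure_pair_measure_Times:
  assumes "finite_measure M" "finite_measure N" "A \<in> sets M" "B \<in> sets N"
  shows "measure (M \<Otimes>\<^sub>M N) (A \<times> B) = measure M A * measure N B"
proof -
  interpret N: finite_measure N by fact
  show ?thesis
    unfolding measure_def using assms
    by (simp add: N.emeasure_pair_measure_Times enn2real_mult)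
qed

lemma measure_pair_measure_eq_integral:
  assumes "prob_space M" "prob_space N" "X \<in> sets (M \<Otimes>\<^sub>M N)"
  shows "measure (M \<Otimes>\<^sub>M N) X = (\<integral>x. measure N (Pair x -` X) \<partial>M)"
    and "integrable M (\<lambda>x. measure N (Pair x -` X))"
proof -
  interpret M: prob_space M by fact
  interpret N: prob_space N by fact
  have "(\<lambda>x. measure N (Pair x -` X)) \<in> borel_measurable M"
    unfolding measure_def using N.measurable_emeasure_Pair[OF assms(3)] by measurable
  then show int: "integrable M (\<lambda>x. measure N (Pair x -` X))"
    by (intro M.integrable_const_bound[where B=1]) auto
  have "emeasure (M \<Otimes>\<^sub>M N) X = (\<integral>\<^sup>+x. ennreal (measure N (Pair x -` X)) \<partial>M)"
    using N.emeasure_pair_measure_alt[OF assms(3)] by (simp add: N.emeasure_eq_measure)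
  also have "\<dots> = ennreal (\<integral>x. measure N (Pair x -` X) \<partial>M)"
    by (rule nn_integral_eq_integral[OF int]) auto
  finally show "measure (M \<Otimes>\<^sub>M N) X = (\<integral>x. measure N (Pair x -` X) \<partial>M)"
    by (simp add: measure_def)
qed

lemma AE_pair_exp_law_pos:
  assumes "0 < r1" "0 < r2"
  shows "AE (x, y) in exp_law r1 \<Otimes>\<^sub>M exp_law r2. 0 < x \<and> 0 < y"
proof (rule AE_I')
  interpret M2: prob_space "exp_law r2" using prob_space_exp_law[OF assms(2)] .
  have "{..0} \<times> UNIV \<in> null_sets (exp_law r1 \<Otimes>\<^sub>M exp_law r2)"
    using null_sets_exp_law_atMost_0[OF assms(1)] by (intro M2.times_in_null_sets1) auto
  moreover have "UNIV \<times> {..0} \<in> null_sets (exp_law r1 \<Otimes>\<^sub>M exp_law r2)"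
    using null_sets_exp_law_atMost_0[OF assms(2)] by (intro M2.times_in_null_sets2) auto
  ultimately show "{..0} \<times> UNIV \<union> UNIV \<times> {..0} \<in> null_sets (exp_law r1 \<Otimes>\<^sub>M exp_law r2)"
    by (rule null_sets.Un)
qed (auto simp: space_pair_measure)

lemma prob_space_chan_law: "0 < rho \<Longrightarrow> 0 < l1 \<Longrightarrow> 0 < l2 \<Longrightarrow> prob_space (chan_law rho l1 l2)"
  unfolding chan_law_def by (intro prob_space_pair prob_space_exp_law)

lemma sets_chan_law_Collect:
  "Measurable.pred (exp_law rho \<Otimes>\<^sub>M exp_law l1 \<Otimes>\<^sub>M exp_law l2) P \<Longrightarrow> Collect P \<in> sets (chan_law rho l1 l2)"
  by (simp add: pred_def chan_law_def space_pair_measure)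

lemma AE_chan_law_pos:
  assumes "0 < rho" "0 < l1" "0 < l2"
  shows "AE (h, g) in chan_law rho l1 l2. 0 < h"
proof (rule AE_I')
  interpret Q: prob_space "exp_law l1 \<Otimes>\<^sub>M exp_law l2"
    by (intro prob_space_pair prob_space_exp_law assms)
  show "{..0} \<times> space (exp_law l1 \<Otimes>\<^sub>M exp_law l2) \<in> null_sets (chan_law rho l1 l2)"
    using null_sets_exp_law_atMost_0[OF assms(1)] unfolding chan_law_def by auto
qed (auto simp: space_pair_measure)

section \<open>Outage events of QMF\<close>

lemma measurable_R_QMF [measurable]:
  assumes [measurable]: "f \<in> borel_measurable M" "g \<in> borel_measurable M"
    "k \<in> borel_measurable M" "d \<in> borel_measurable M"
  shows "(\<lambda>x. R_QMF (f x) (g x) (k x) (d x)) \<in> borel_measurable M"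
  unfolding R_QMF_def by measurable

lemma R_QMF_less_of_cut_less:
  assumes "0 < R" "log 2 (1 + g1 + g2) - log 2 ((1 + D) / D) < R"
  shows "R_QMF h g1 g2 D < R"
  using assms unfolding R_QMF_def by auto

lemma R_QMF_less_of_sum_less:
  assumes "0 < R" "0 < D" "0 < 1 + g1 + g2" "1 + g1 + g2 < 2 powr R * ((1 + D) / D)"
  shows "R_QMF h g1 g2 D < R"
proof (rule R_QMF_less_of_cut_less)
  have "log 2 (1 + g1 + g2) < log 2 (2 powr R * ((1 + D) / D))"
    using assms by (subst log_less_cancel_iff) auto
  also have "\<dots> = R + log 2 ((1 + D) / D)"
    using assms by (subst log_mult) auto
  finally show "log 2 (1 + g1 + g2) - log 2 ((1 + D) / D) < R" by simp
qed fact

lemma QMF_outage_cases: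
  fixes R h D g1 g2 :: real
  assumes "0 < R" "0 < h" "0 < D" "0 \<le> g1" "0 \<le> g2" "R_QMF h g1 g2 D < R"
  shows "g2 \<le> 2 powr R - 1 - h / (1 + D) \<or>
         (g1 \<le> h / (1 + D) + 2 powr R / D \<and> 2 powr R - 1 - h / (1 + D) < g2 \<and> g2 \<le> 2 powr R - 1) \<or>
         (g1 \<le> 2 powr R / D \<and> 2 powr R - 1 < g2 \<and> g2 \<le> 2 powr R - 1 + 2 powr R / D)"
proof -
  define c where "c = 2 powr R"
  have "0 < c" unfolding c_def by simp
  have "0 \<le> h / (1 + D)" using assms by simp
  have "R > log 2 (1 + h / (1 + D) + g2) \<or> R > log 2 (1 + g1 + g2) - log 2 ((1 + D) / D)"
    using assms(6) unfolding R_QMF_def by auto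
  moreover have "g2 < c - 1 - h / (1 + D)" if "R > log 2 (1 + h / (1 + D) + g2)"
  proof -
    have "1 + h / (1 + D) + g2 < c" unfolding c_def
      using that log_less_iff[of 2 "1 + h / (1 + D) + g2" R] \<open>0 \<le> h / (1 + D)\<close> assms by auto
    then show ?thesis by simp
  qed
  moreover have "g1 + g2 < c - 1 + c / D" if "R > log 2 (1 + g1 + g2) - log 2 ((1 + D) / D)"
  proof -
    have "log 2 (c * ((1 + D) / D)) = R + log 2 ((1 + D) / D)"
      unfolding c_def using assms by (subst log_mult) auto
    then have "log 2 (1 + g1 + g2) < log 2 (c * ((1 + D) / D))" using that by simp
    then have "1 + g1 + g2 < c * ((1 + D) / D)"
      using assms \<open>0 < c\<close> by (subst (asm) log_less_cancel_iff) auto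
    also have "c * ((1 + D) / D) = c + c / D" using assms by (simp add: field_simps)
    finally show ?thesis by simp
  qed
  ultimately show ?thesis unfolding c_def[symmetric] using assms
    by (smt (verit) divide_nonneg_nonneg)
qed

lemma exp_rectangle_inequality:
  fixes l1 l2 \<delta> \<eta> :: real
  assumes l1: "0 < l1" and l2: "0 < l2" and "0 < \<delta>" "0 < \<eta>"
    and small: "l1 * (\<delta> + \<eta>) \<le> 1/2" and sq: "2 * l1 * \<eta>\<^sup>2 < \<delta>"
  shows "(1 - exp (- \<eta> * l1)) * (1 - exp (- \<eta> * l2)) < exp (- (\<delta> + \<eta>) * l1) * (exp (\<delta> * l2) - 1)"
proof -
  have "1 - exp (- \<eta> * l1) \<le> \<eta> * l1" "1 - exp (- \<eta> * l2) \<le> \<eta> * l2"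
    using exp_ge_add_one_self[of "- \<eta> * l1"] exp_ge_add_one_self[of "- \<eta> * l2"] by auto
  moreover have "0 \<le> 1 - exp (- \<eta> * l1)" "0 \<le> 1 - exp (- \<eta> * l2)"
    using \<open>0 < \<eta>\<close> l1 l2 by auto
  ultimately have "(1 - exp (- \<eta> * l1)) * (1 - exp (- \<eta> * l2)) \<le> (\<eta> * l1) * (\<eta> * l2)"
    by (intro mult_mono) auto
  also have "\<dots> = (l1 * \<eta>\<^sup>2) * l2" by (simp add: power2_eq_square)
  also have "\<dots> < (1/2) * (\<delta> * l2)" using sq l2 by simp
  also have "\<dots> \<le> exp (- (\<delta> + \<eta>) * l1) * (exp (\<delta> * l2) - 1)"
  proof (intro mult_mono)
    show "1/2 \<le> exp (- (\<delta> + \<eta>) * l1)"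
      using exp_ge_add_one_self[of "- (\<delta> + \<eta>) * l1"] small by (simp add: algebra_simps)
    show "\<delta> * l2 \<le> exp (\<delta> * l2) - 1"
      using exp_ge_add_one_self[of "\<delta> * l2"] by linarith
  qed (use \<open>0 < \<delta>\<close> l2 in auto)
  finally show ?thesis .
qed

lemma R_QMF_less_near_threshold:
  assumes "0 < R" "0 < D" "D < N" "0 < g1" "g1 \<le> 2 powr R / (2 * N)"
    and "2 powr R - 1 < g2" "g2 \<le> 2 powr R - 1 + 2 powr R / (2 * N)"
  shows "R_QMF h g1 g2 D < R"
proof (rule R_QMF_less_of_sum_less[OF assms(1,2)])
  show "0 < 1 + g1 + g2" using assms powr_gt_zero[of 2 R] by linarith
  have "2 powr R / (2 * N) + 2 powr R / (2 * N) = 2 powr R / N" by simp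
  then have "1 + g1 + g2 \<le> 2 powr R + 2 powr R / N" using assms by linarith
  also have "\<dots> < 2 powr R + 2 powr R / D" using assms by (simp add: divide_strict_left_mono)
  also have "\<dots> = 2 powr R * ((1 + D) / D)" using assms by (simp add: field_simps)
  finally show "1 + g1 + g2 < 2 powr R * ((1 + D) / D)" .
qed

section \<open>A coarse quantizer beats direct transmission\<close>

text \<open>
  The three rectangles below cover the QMF outage region: \<open>g2\<close> fails even with the relay
  share \<open>\<delta>\<close>, or else the relay cut fails, which forces \<open>g1 \<le> \<delta> + \<eta>\<close> for \<open>g2 \<le> a\<close> and
  \<open>g1 \<le> \<eta>\<close> for \<open>g2 > a\<close>. The bracket in the bound is the gain minus the loss against direct
  transmission.
\<close>

lemma cond_outage_bound:
  fixes l1 l2 R h D :: real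
  defines "a \<equiv> 2 powr R - 1" and "\<delta> \<equiv> h / (1 + D)" and "\<eta> \<equiv> 2 powr R / D"
  assumes l1: "0 < l1" and l2: "0 < l2" and R: "0 < R" and h: "0 < h" and D: "0 < D"
    and "\<delta> \<le> a"
  shows "cond_outage l1 l2 R h D \<le> 1 - exp (- a * l2)
           - exp (- a * l2) * (exp (- (\<delta> + \<eta>) * l1) * (exp (\<delta> * l2) - 1)
                               - (1 - exp (- \<eta> * l1)) * (1 - exp (- \<eta> * l2)))"
proof -
  let ?Q = "exp_law l1 \<Otimes>\<^sub>M exp_law l2"
  interpret M1: prob_space "exp_law l1" using prob_space_exp_law[OF l1] .
  interpret M2: prob_space "exp_law l2" using prob_space_exp_law[OF l2] .
  interpret Q: prob_space ?Q by (intro prob_space_pair) unfold_locales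
  have fin: "finite_measure (exp_law l1)" "finite_measure (exp_law l2)" by unfold_locales
  have "0 < \<delta>" "0 < \<eta>" "0 < a" using h D R by (auto simp: \<delta>_def \<eta>_def a_def)
  define E1 :: "(real \<times> real) set" where "E1 = UNIV \<times> {..a - \<delta>}"
  define E2 :: "(real \<times> real) set" where "E2 = {..\<delta> + \<eta>} \<times> {a - \<delta><..a}"
  define E3 :: "(real \<times> real) set" where "E3 = {..\<eta>} \<times> {a<..a + \<eta>}"
  have sets: "E1 \<in> sets ?Q" "E2 \<in> sets ?Q" "E3 \<in> sets ?Q"
    unfolding E1_def E2_def E3_def by auto
  have "AE g in ?Q. g \<in> {(g1, g2). R_QMF h g1 g2 D < R} \<longrightarrow> g \<in> E1 \<union> E2 \<union> E3"
    using AE_pair_exp_law_pos[OF l1 l2]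
  proof eventually_elim
    case (elim g)
    then show ?case
      using QMF_outage_cases[OF R h D, of "fst g" "snd g"]
      unfolding E1_def E2_def E3_def a_def \<delta>_def \<eta>_def by auto
  qed
  then have "cond_outage l1 l2 R h D \<le> measure ?Q (E1 \<union> E2 \<union> E3)"
    unfolding cond_outage_def using sets by (intro Q.finite_measure_mono_AE) auto
  also have "\<dots> \<le> measure ?Q E1 + measure ?Q E2 + measure ?Q E3"
    using measure_Un_le[of "E1 \<union> E2" ?Q E3] measure_Un_le[of E1 ?Q E2] sets by auto
  also have "\<dots> = (1 - exp (- (a - \<delta>) * l2))
      + (1 - exp (- (\<delta> + \<eta>) * l1)) * (exp (- (a - \<delta>) * l2) - exp (- a * l2))
      + (1 - exp (- \<eta> * l1)) * (exp (- a * l2) - exp (- (a + \<eta>) * l2))"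
    unfolding E1_def E2_def E3_def
    using \<open>0 < \<delta>\<close> \<open>0 < \<eta>\<close> \<open>0 < a\<close> \<open>\<delta> \<le> a\<close>
    by (simp add: measure_pair_measure_Times[OF fin] measure_exp_law_atMost l1 l2
        measure_exp_law_greaterThanAtMost M1.prob_space[simplified])
  also have "\<dots> = 1 - exp (- a * l2)
           - exp (- a * l2) * (exp (- (\<delta> + \<eta>) * l1) * (exp (\<delta> * l2) - 1)
                               - (1 - exp (- \<eta> * l1)) * (1 - exp (- \<eta> * l2)))"
  proof -
    have "exp (- (a - \<delta>) * l2) = exp (- a * l2) * exp (\<delta> * l2)"
      "exp (- (a + \<eta>) * l2) = exp (- a * l2) * exp (- \<eta> * l2)"
      by (simp_all add: exp_add[symmetric] algebra_simps)
    then show ?thesis by (simp add: algebra_simps)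
  qed
  finally show ?thesis .
qed

lemma direct_outage_ge:
  assumes l1: "0 < l1" and l2: "0 < l2" and R: "0 < R"
  shows "1 - exp (- (2 powr R - 1) * l2)
           \<le> measure (exp_law l1 \<Otimes>\<^sub>M exp_law l2) {(g1, g2). R > log 2 (1 + g2)}"
proof -
  let ?Q = "exp_law l1 \<Otimes>\<^sub>M exp_law l2"
  interpret M1: prob_space "exp_law l1" using prob_space_exp_law[OF l1] .
  interpret M2: prob_space "exp_law l2" using prob_space_exp_law[OF l2] .
  interpret Q: prob_space ?Q by (intro prob_space_pair) unfold_locales
  have "{(g1, g2). R > log 2 (1 + g2)} \<in> sets ?Q"
    using measurable_sets_Collect[of snd ?Q borel "\<lambda>g2. R > log 2 (1 + g2)"]
    by (simp add: space_pair_measure case_prod_unfold)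
  have "0 < 2 powr R - 1" using R by simp
  have "1 - exp (- (2 powr R - 1) * l2) = measure ?Q (UNIV \<times> {0<..<2 powr R - 1})"
    using \<open>0 < 2 powr R - 1\<close>
    by (simp add: measure_pair_measure_Times finite_measure_exp_law l1 l2
        measure_exp_law_greaterThanLessThan M1.prob_space[simplified])
  also have "\<dots> \<le> measure ?Q {(g1, g2). R > log 2 (1 + g2)}"
  proof (rule Q.finite_measure_mono[OF _ \<open>_ \<in> sets ?Q\<close>], safe)
    fix g1 g2 :: real assume "g2 \<in> {0<..<2 powr R - 1}"
    then show "R > log 2 (1 + g2)" by (simp add: log_less_iff)
  qed
  finally show ?thesis .
qed

lemma ex_quantizer_less_direct_outage:
  assumes l1: "0 < l1" and l2: "0 < l2" and R: "0 < R" and h: "0 < h"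
  shows "\<exists>D>0. cond_outage l1 l2 R h D
                 < measure (exp_law l1 \<Otimes>\<^sub>M exp_law l2) {(g1, g2). R > log 2 (1 + g2)}"
proof -
  define c where "c = 2 powr R"
  define a where "a = c - 1"
  have "0 < a" using R by (simp add: a_def c_def)
  \<comment> \<open>each summand secures one of \<open>l1 (\<delta> + \<eta>) \<le> 1/2\<close>, \<open>2 l1 \<eta>\<^sup>2 < \<delta>\<close>, \<open>\<delta> \<le> a\<close>\<close>
  define D where "D = 1 + 2 * l1 * (h + c) + 4 * l1 * c\<^sup>2 / h + h / a"
  define \<delta> where "\<delta> = h / (1 + D)"
  define \<eta> where "\<eta> = c / D"
  have terms: "0 \<le> 2 * l1 * (h + c)" "0 \<le> 4 * l1 * c\<^sup>2 / h" "0 \<le> h / a"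
    using l1 h \<open>0 < a\<close> by (auto simp: c_def)
  then have "1 \<le> D" by (simp add: D_def)
  have "0 < \<delta>" "0 < \<eta>" using h \<open>1 \<le> D\<close> by (simp_all add: \<delta>_def \<eta>_def c_def)
  have "\<delta> \<le> h / D" using h \<open>1 \<le> D\<close> unfolding \<delta>_def by (intro divide_left_mono) auto
  have "h / (2 * D) \<le> \<delta>" using h \<open>1 \<le> D\<close> unfolding \<delta>_def by (intro divide_left_mono) auto
  have "\<delta> \<le> a"
  proof -
    have "h / a \<le> D" using terms by (simp add: D_def)
    then have "h / D \<le> a" using \<open>1 \<le> D\<close> \<open>0 < a\<close> h by (simp add: field_simps)
    with \<open>\<delta> \<le> h / D\<close> show ?thesis by simp
  qed
  have small: "l1 * (\<delta> + \<eta>) \<le> 1/2"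
  proof -
    have "l1 * (\<delta> + \<eta>) \<le> l1 * ((h + c) / D)"
      using \<open>\<delta> \<le> h / D\<close> l1 unfolding \<eta>_def by (intro mult_left_mono) (auto simp: add_divide_distrib)
    also have "\<dots> \<le> 1/2"
      using terms \<open>1 \<le> D\<close> l1 by (simp add: D_def field_simps)
    finally show ?thesis .
  qed
  have sq: "2 * l1 * \<eta>\<^sup>2 < \<delta>"
  proof -
    have "4 * l1 * c\<^sup>2 / h < D" using terms by (simp add: D_def)
    then have "2 * l1 * \<eta>\<^sup>2 < h / (2 * D)"
      using h \<open>1 \<le> D\<close> by (simp add: \<eta>_def field_simps power2_eq_square)
    with \<open>h / (2 * D) \<le> \<delta>\<close> show ?thesis by simp
  qed
  have "cond_outage l1 l2 R h D \<le> 1 - exp (- a * l2)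
           - exp (- a * l2) * (exp (- (\<delta> + \<eta>) * l1) * (exp (\<delta> * l2) - 1)
                               - (1 - exp (- \<eta> * l1)) * (1 - exp (- \<eta> * l2)))"
    using cond_outage_bound[OF l1 l2 R h, of D] \<open>\<delta> \<le> a\<close> \<open>1 \<le> D\<close>
    by (simp add: a_def c_def \<delta>_def \<eta>_def)
  also have "\<dots> < 1 - exp (- a * l2)"
    using exp_rectangle_inequality[OF l1 l2 \<open>0 < \<delta>\<close> \<open>0 < \<eta>\<close> small sq] by simp
  also have "\<dots> \<le> measure (exp_law l1 \<Otimes>\<^sub>M exp_law l2) {(g1, g2). R > log 2 (1 + g2)}"
    using direct_outage_ge[OF l1 l2 R] by (simp add: a_def c_def)
  finally show ?thesis using \<open>1 \<le> D\<close> by (intro exI[of _ D]) simp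
qed

section \<open>The hybrid scheme\<close>

lemma ex_nat_emeasure_less_not_0:
  fixes f :: "'a \<Rightarrow> real"
  assumes [measurable]: "f \<in> borel_measurable M" "A \<in> sets M" and "emeasure M A \<noteq> 0"
  shows "\<exists>n::nat. emeasure M {x \<in> A. f x < real n} \<noteq> 0"
proof (rule ccontr)
  assume "\<nexists>n::nat. emeasure M {x \<in> A. f x < real n} \<noteq> 0"
  moreover have "{x \<in> A. f x < real n} \<in> sets M" for n :: nat
    by measurable
  ultimately have "(\<Union>n::nat. {x \<in> A. f x < real n}) \<in> null_sets M"
    by (intro null_sets_UN) auto
  moreover have "(\<Union>n::nat. {x \<in> A. f x < real n}) = A"
    using reals_Archimedean2 by auto
  ultimately show False using assms(3) by auto
qed

lemma ex_DF_success_QMF_outage: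
  fixes Dstar :: "real \<Rightarrow> real"
  assumes R: "0 < R" and rho: "0 < rho" and l1: "0 < l1" and l2: "0 < l2"
    and [measurable]: "Dstar \<in> borel_measurable borel"
    and Dstar_pos: "\<And>h. 0 < h \<Longrightarrow> 0 < Dstar h"
  shows "\<exists>E \<in> sets (chan_law rho l1 l2). 0 < measure (chan_law rho l1 l2) E \<and>
           (\<forall>(h, g1, g2) \<in> E. R < log 2 (1 + h) \<and> R < log 2 (1 + g1 + g2)
                              \<and> R_QMF h g1 g2 (Dstar h) < R)"
proof -
  define a where "a = 2 powr R - 1"
  have "0 < a" using R by (simp add: a_def)
  have "emeasure (exp_law rho) {a<..} \<noteq> 0"
    using measure_exp_law_greaterThan[OF rho, of a] \<open>0 < a\<close>
      finite_measure.emeasure_eq_measure[OF finite_measure_exp_law[OF rho]] by simp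
  then obtain n :: nat where n: "emeasure (exp_law rho) {h \<in> {a<..}. Dstar h < real n} \<noteq> 0"
    using ex_nat_emeasure_less_not_0[of Dstar "exp_law rho" "{a<..}"] by auto
  define B where "B = {h \<in> {a<..}. Dstar h < real n}"
  have "B \<in> sets (exp_law rho)" unfolding B_def by measurable
  define \<epsilon> where "\<epsilon> = 2 powr R / (2 * (real n + 1))"
  have "0 < \<epsilon>" by (simp add: \<epsilon>_def)
  define E where "E = B \<times> ({0<..\<epsilon>} \<times> {a<..a + \<epsilon>})"
  have "E \<in> sets (chan_law rho l1 l2)"
    using \<open>B \<in> sets (exp_law rho)\<close> by (simp add: E_def chan_law_def)
  moreover have "0 < measure (chan_law rho l1 l2) E"
  proof -
    have "0 < measure (exp_law rho) B"
      using n finite_measure.emeasure_eq_measure[OF finite_measure_exp_law[OF rho]]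
      by (simp add: B_def zero_less_measure_iff)
    moreover have "0 < exp (- a * l2) - exp (- (a + \<epsilon>) * l2)"
      using \<open>0 < \<epsilon>\<close> l2 by (simp add: algebra_simps)
    ultimately show ?thesis
      using \<open>B \<in> sets (exp_law rho)\<close> \<open>0 < a\<close> \<open>0 < \<epsilon>\<close> l1 l2 rho
      by (simp add: E_def chan_law_def measure_pair_measure_Times finite_measure_exp_law
          finite_measure_pair_measure measure_exp_law_greaterThanAtMost)
  qed
  moreover have "R < log 2 (1 + h) \<and> R < log 2 (1 + g1 + g2) \<and> R_QMF h g1 g2 (Dstar h) < R"
    if "(h, g1, g2) \<in> E" for h g1 g2
  proof -
    have g: "a < h" "Dstar h < real n" "0 < g1" "g1 \<le> \<epsilon>" "a < g2" "g2 \<le> a + \<epsilon>"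
      using that by (auto simp: E_def B_def)
    have "R_QMF h g1 g2 (Dstar h) < R"
      using g Dstar_pos[of h] \<open>0 < a\<close>
      by (intro R_QMF_less_near_threshold[OF R, where N = "real n + 1"]) (auto simp: a_def \<epsilon>_def)
    moreover have "R < log 2 (1 + h)" "R < log 2 (1 + g1 + g2)"
      using g \<open>0 < a\<close> by (simp_all add: less_log_iff a_def)
    ultimately show ?thesis by simp
  qed
  ultimately show ?thesis by blast
qed

lemma P_HYB_less_P_QMF:
  fixes Dstar :: "real \<Rightarrow> real"
  assumes R: "0 < R" and rho: "0 < rho" and l1: "0 < l1" and l2: "0 < l2"
    and [measurable]: "Dstar \<in> borel_measurable borel"
    and Dstar_pos: "\<And>h. 0 < h \<Longrightarrow> 0 < Dstar h"
  shows "P_HYB rho l1 l2 R Dstar < P_QMF rho l1 l2 R Dstar"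
proof -
  let ?C = "chan_law rho l1 l2"
  interpret C: prob_space ?C using prob_space_chan_law[OF rho l1 l2] .
  define S1 where "S1 = {(h, g1, g2). R < log 2 (1 + h) \<and> R > log 2 (1 + g1 + g2)}"
  define S2 where "S2 = {(h, g1, g2). R \<ge> log 2 (1 + h) \<and> R > R_QMF h g1 g2 (Dstar h)}"
  define T where "T = {(h, g1, g2). R > R_QMF h g1 g2 (Dstar h)}"
  have sets: "S1 \<in> sets ?C" "S2 \<in> sets ?C" "T \<in> sets ?C"
    unfolding S1_def S2_def T_def by (intro sets_chan_law_Collect; measurable)+
  obtain E where "E \<in> sets ?C" "0 < measure ?C E" and E:
    "\<And>h g1 g2. (h, g1, g2) \<in> E \<Longrightarrow>
       R < log 2 (1 + h) \<and> R < log 2 (1 + g1 + g2) \<and> R_QMF h g1 g2 (Dstar h) < R"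
    using ex_DF_success_QMF_outage[OF assms] by fast
  have "S1 \<inter> S2 = {}" "(S1 \<union> S2) \<inter> E = {}"
    using E by (fastforce simp: S1_def S2_def)+
  have "P_HYB rho l1 l2 R Dstar = measure ?C S1 + measure ?C S2"
    unfolding P_HYB_def S1_def S2_def ..
  with \<open>S1 \<inter> S2 = {}\<close> \<open>(S1 \<union> S2) \<inter> E = {}\<close>
  have "P_HYB rho l1 l2 R Dstar + measure ?C E = measure ?C (S1 \<union> S2 \<union> E)"
    using sets \<open>E \<in> sets ?C\<close> by (simp add: C.finite_measure_Union)
  also have "\<dots> \<le> measure ?C T"
  proof (rule C.finite_measure_mono_AE[OF _ \<open>T \<in> sets ?C\<close>])
    show "AE x in ?C. x \<in> S1 \<union> S2 \<union> E \<longrightarrow> x \<in> T"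
      using AE_chan_law_pos[OF rho l1 l2]
    proof eventually_elim
      case (elim x)
      obtain h g1 g2 where x: "x = (h, g1, g2)" by (cases x) auto
      have "0 < Dstar h" using elim Dstar_pos by (simp add: x)
      then have "0 < log 2 ((1 + Dstar h) / Dstar h)" by simp
      then have "R_QMF h g1 g2 (Dstar h) < R" if "x \<in> S1"
        using that by (intro R_QMF_less_of_cut_less[OF R]) (auto simp: x S1_def)
      then show ?case using E[of h g1 g2] elim by (auto simp: x S2_def T_def)
    qed
  qed
  also have "\<dots> = P_QMF rho l1 l2 R Dstar" by (simp add: P_QMF_def T_def)
  finally show ?thesis using \<open>0 < measure ?C E\<close> by simp
qed

lemma P_HYB_less_P_DF:
  fixes Dstar :: "real \<Rightarrow> real"
  assumes R: "0 < R" and rho: "0 < rho" and l1: "0 < l1" and l2: "0 < l2"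
    and [measurable]: "Dstar \<in> borel_measurable borel"
    and Dstar_opt: "\<And>h D. 0 < h \<Longrightarrow> 0 < D \<Longrightarrow>
                      cond_outage l1 l2 R h (Dstar h) \<le> cond_outage l1 l2 R h D"
  shows "P_HYB rho l1 l2 R Dstar < P_DF rho l1 l2 R"
proof -
  let ?H = "exp_law rho" and ?Q = "exp_law l1 \<Otimes>\<^sub>M exp_law l2" and ?C = "chan_law rho l1 l2"
  interpret H: prob_space ?H using prob_space_exp_law[OF rho] .
  define q where "q = measure ?Q {(g1, g2). R > log 2 (1 + g2)}"
  define S2 where "S2 = {(h, g1, g2). R \<ge> log 2 (1 + h) \<and> R > R_QMF h g1 g2 (Dstar h)}"
  define U where "U = {(h, g1 :: real, g2). R \<ge> log 2 (1 + h) \<and> R > log 2 (1 + g2)}"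
  have sets: "S2 \<in> sets ?C" "U \<in> sets ?C"
    unfolding S2_def U_def by (intro sets_chan_law_Collect; measurable)+
  have fubini: "measure ?C X = (\<integral>h. measure ?Q (Pair h -` X) \<partial>?H)"
      "integrable ?H (\<lambda>h. measure ?Q (Pair h -` X))" if "X \<in> sets ?C" for X
    using that prob_space_pair[OF prob_space_exp_law[OF l1] prob_space_exp_law[OF l2]]
    unfolding chan_law_def by (intro measure_pair_measure_eq_integral H.prob_space_axioms; simp)+
  have section_S2: "measure ?Q (Pair h -` S2)
      = (if R \<ge> log 2 (1 + h) then cond_outage l1 l2 R h (Dstar h) else 0)" for h
    unfolding cond_outage_def S2_def by auto
  have section_U: "measure ?Q (Pair h -` U) = (if R \<ge> log 2 (1 + h) then q else 0)" for h
    unfolding q_def U_def by auto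
  have QMF_better: "cond_outage l1 l2 R h (Dstar h) < q" if h: "0 < h" for h
  proof -
    obtain D where "0 < D" "cond_outage l1 l2 R h D < q"
      using ex_quantizer_less_direct_outage[OF l1 l2 R h] unfolding q_def by blast
    then show ?thesis using Dstar_opt[OF h] by fastforce
  qed
  define a where "a = 2 powr R - 1"
  have "0 < a" using R by (simp add: a_def)
  have "measure ?C S2 < measure ?C U"
    unfolding fubini(1)[OF sets(1)] fubini(1)[OF sets(2)]
  proof (rule H.integral_less_AE[where A="{0<..a}"])
    show "emeasure ?H {0<..a} \<noteq> 0"
      using measure_exp_law_greaterThanAtMost[OF rho, of 0 a] \<open>0 < a\<close> rho
      by (simp add: H.emeasure_eq_measure)
    show "AE h in ?H. h \<in> {0<..a} \<longrightarrow> measure ?Q (Pair h -` S2) \<noteq> measure ?Q (Pair h -` U)"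
    proof (rule AE_I2, safe)
      fix h assume "h \<in> {0<..a}" and "measure ?Q (Pair h -` S2) = measure ?Q (Pair h -` U)"
      moreover have "log 2 (1 + h) \<le> R"
        using \<open>h \<in> {0<..a}\<close> by (simp add: a_def log_le_iff)
      ultimately show False using QMF_better[of h] by (simp add: section_S2 section_U)
    qed
    show "AE h in ?H. measure ?Q (Pair h -` S2) \<le> measure ?Q (Pair h -` U)"
      using AE_exp_law_pos[OF rho] by eventually_elim (auto simp: section_S2 section_U less_imp_le QMF_better)
  qed (use fubini(2) sets in auto)
  then show ?thesis by (simp add: P_HYB_def P_DF_def S2_def U_def)
qed

theorem mainTheorem11:
  fixes R rho l1 l2 :: real and Dstar :: "real \<Rightarrow> real"
  assumes "R > 0" and "rho > 0" and "l1 > 0" and "l2 > 0"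
    and "Dstar \<in> borel_measurable borel"
    and "\<And>h. h > 0 \<Longrightarrow> Dstar h > 0"
    and "\<And>h D. h > 0 \<Longrightarrow> D > 0 \<Longrightarrow> cond_outage l1 l2 R h (Dstar h) \<le> cond_outage l1 l2 R h D"
  shows "P_HYB rho l1 l2 R Dstar < P_QMF rho l1 l2 R Dstar
       \<and> P_HYB rho l1 l2 R Dstar < P_DF rho l1 l2 R"
  using P_HYB_less_P_QMF[OF assms(1-6)] P_HYB_less_P_DF[OF assms(1-5,7)] by simp

end
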